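(* Let $n\ge 4$ and let $L$ be an $n$-bow, i.e. a generic length vector satisfying the strict triangle inequality such that $\{n,i\}$ is long for every $i=1,\dots,n-1$. Then $\Gamma(L)$ has exactly $2^{n-1}-2$ vertices, and this is the minimal number of vertices of $\Gamma(L')$ over all generic length vectors $L'\in\mathbb{R}_{>0}^n$ satisfying the strict triangle inequality.
   Context: Let $n\ge 4$ and $L=(l_1,\dots,l_n)$ be positive reals with $l_i<\sum_{j\ne i}l_j$ for every $i$ (strict triangle inequality), and generic: there is no $J\subseteq[n]$ with $\sum_{i\in J}l_i=\sum_{i\notin J}l_i$. Here $[n]=\{1,\dots,n\}$ and $|L|=\sum_{i=1}^n l_i$. A set $I\subseteq[n]$ is short if $\sum_{i\in I}l_i<|L|/2$ and long otherwise. A cyclically ordered partition of $[n]$ into $k$ parts is a sequence $(A_1,\dots,A_k)$ of pairwise disjoint nonempty sets with union $[n]$, considered up to cyclic shifts $(A_1,\dots,A_k)\sim(A_2,\dots,A_k,A_1)$; there is no ordering inside a part. It is admissible if every part is short. The graph $\Gamma(L)$ has as vertices the admissible cyclically ordered partitions of $[n]$ into 3 parts, written $(I,J,K)$, and as edges the admissible cyclically ordered partitions into 4 parts $(A,B,C,D)$; such an edge is incident to each of the partitions $(A\cup B,C,D)$, $(A,B\cup C,D)$, $(A,B,C\cup D)$, $(D\cup A,B,C)$ that is admissible. Equivalently, two vertices are adjacent iff one is obtained from the other by moving a nonempty proper subset of one part into another part. *)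

theory Defs
  imports Complex_Main
begin

text \<open>Length vectors L = (l_1,...,l_n) are modelled as functions nat => real,
  of which only the values on {1..n} matter.\<close>

definition total_length :: "(nat \<Rightarrow> real) \<Rightarrow> nat \<Rightarrow> real" where
  "total_length L n = (\<Sum>i\<in>{1..n}. L i)"

definition short :: "(nat \<Rightarrow> real) \<Rightarrow> nat \<Rightarrow> nat set \<Rightarrow> bool" where
  "short L n I \<longleftrightarrow> (\<Sum>i\<in>I. L i) < total_length L n / 2"

definition long :: "(nat \<Rightarrow> real) \<Rightarrow> nat \<Rightarrow> nat set \<Rightarrow> bool" where
  "long L n I \<longleftrightarrow> \<not> short L n I"

definition length_vector :: "(nat \<Rightarrow> real) \<Rightarrow> nat \<Rightarrow> bool" where
  "length_vector L n \<longleftrightarrow>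
     (\<forall>i\<in>{1..n}. L i > 0) \<and>
     (\<forall>i\<in>{1..n}. L i < (\<Sum>j\<in>{1..n} - {i}. L j)) \<and>
     (\<forall>J. J \<subseteq> {1..n} \<longrightarrow> (\<Sum>i\<in>J. L i) \<noteq> (\<Sum>i\<in>{1..n} - J. L i))"

definition admissible3 :: "(nat \<Rightarrow> real) \<Rightarrow> nat \<Rightarrow> nat set \<times> nat set \<times> nat set \<Rightarrow> bool" where
  "admissible3 L n t \<longleftrightarrow> (case t of (I, J, K) \<Rightarrow>
     I \<noteq> {} \<and> J \<noteq> {} \<and> K \<noteq> {} \<and>
     I \<inter> J = {} \<and> J \<inter> K = {} \<and> I \<inter> K = {} \<and>
     I \<union> J \<union> K = {1..n} \<and>
     short L n I \<and> short L n J \<and> short L n K)"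

definition cyc_class :: "'a \<times> 'a \<times> 'a \<Rightarrow> ('a \<times> 'a \<times> 'a) set" where
  "cyc_class t = (case t of (I, J, K) \<Rightarrow> {(I, J, K), (J, K, I), (K, I, J)})"

definition Gamma_vertices :: "(nat \<Rightarrow> real) \<Rightarrow> nat \<Rightarrow> (nat set \<times> nat set \<times> nat set) set set" where
  "Gamma_vertices L n = cyc_class ` {t. admissible3 L n t}"

definition is_bow :: "(nat \<Rightarrow> real) \<Rightarrow> nat \<Rightarrow> bool" where
  "is_bow L n \<longleftrightarrow> length_vector L n \<and> (\<forall>i\<in>{1..n-1}. long L n {n, i})"

end

theory Submission
  imports Defs
begin

(* Every cyclic class of an admissible triple has exactly one
   representative (I, J, K) whose first part contains a fixed index m, so the
   vertices of Gamma(L) are counted by these "anchored" triples.  With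
   R = [n] - {m}, let S be the set of the 2^(n-1) - 2 nonempty proper subsets
   of R.

   Bows (m = n): a short part containing n must be {n}, since every {n, i} is
   long; so the anchored triples are exactly ({n}, X, R - X) for X \<in> S, and all
   of them are admissible.

   Lower bound for arbitrary L (m of maximal length): X \<in> S is sent to
   ({m}, X, R - X) if X and R - X are short; a long X is cut into two short
   pieces V, X - V (possible because l_m is maximal), giving
   ({m} \<union> (R - X), V, X - V); symmetrically if R - X is long, with the last
   two parts swapped.  Taking V \<ni> Min X lets X be read off the triple, so the
   map is injective and Gamma(L) has at least 2^(n-1) - 2 vertices. *)

section \<open>Short and long subsets\<close>

lemma sum_compl:
  assumes "A \<subseteq> {1..n}"
  shows "sum L A + sum L ({1..n} - A) = total_length L n"
  using sum.subset_diff[OF assms, of L] unfolding total_length_def by simp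

lemma length_vector_pos: "length_vector L n \<Longrightarrow> i \<in> {1..n} \<Longrightarrow> L i > 0"
  unfolding length_vector_def by blast

lemma short_mono:
  assumes lv: "length_vector L n" and "B \<subseteq> {1..n}" "A \<subseteq> B" "short L n B"
  shows "short L n A"
proof -
  have "finite B" using assms(2) finite_subset by blast
  moreover have "\<forall>b\<in>B - A. 0 \<le> L b" using assms(2) length_vector_pos[OF lv] by fastforce
  ultimately have "sum L A \<le> sum L B" using assms(3) by (auto intro!: sum_mono2)
  then show ?thesis using assms(4) unfolding short_def by linarith
qed

text \<open>By genericity, the complement of a long set is short.\<close>
lemma short_compl_of_long:
  assumes "length_vector L n" "A \<subseteq> {1..n}" "\<not> short L n A"
  shows "short L n ({1..n} - A)"
proof -
  have "sum L A \<noteq> sum L ({1..n} - A)" using assms(1,2) unfolding length_vector_def by blast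
  then show ?thesis using sum_compl[OF assms(2), of L] assms(3) unfolding short_def by linarith
qed

text \<open>Singletons are short: this is the strict triangle inequality.\<close>
lemma short_singleton:
  assumes "length_vector L n" "i \<in> {1..n}"
  shows "short L n {i}"
proof -
  have "L i < sum L ({1..n} - {i})" using assms unfolding length_vector_def by blast
  then show ?thesis using sum_compl[of "{i}" n L] assms(2) unfolding short_def by simp
qed

lemma greedy_subset:
  assumes "finite D" "\<forall>x\<in>D. 0 < f x \<and> f x \<le> c" "0 \<le> a" "a < sum f D"
  shows "\<exists>V\<subseteq>D. a < sum f V \<and> sum f V \<le> a + (c::real)"
  using assms
proof (induction D rule: finite_induct)
  case empty
  then show ?case by simp
next
  case (insert x F)
  show ?case
  proof (cases "a < sum f F")
    case True
    then show ?thesis using insert by blast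
  next
    case False
    then show ?thesis using insert by (intro exI[of _ "insert x F"]) auto
  qed
qed

lemma exists_longest_index:
  fixes L :: "nat \<Rightarrow> real" and n :: nat
  assumes "n \<ge> 1"
  obtains m where "m \<in> {1..n}" "\<forall>i\<in>{1..n}. L i \<le> L m"
proof -
  have fin: "finite (L ` {1..n})" and ne: "L ` {1..n} \<noteq> {}" using assms by auto
  obtain m where m: "m \<in> {1..n}" "L m = Max (L ` {1..n})"
    using Max_in[OF fin ne] by (metis imageE)
  then show ?thesis using that fin by simp
qed

section \<open>Vertices as anchored triples\<close>

definition anchored :: "(nat \<Rightarrow> real) \<Rightarrow> nat \<Rightarrow> nat \<Rightarrow> (nat set \<times> nat set \<times> nat set) set" where
  "anchored L n m = {t. admissible3 L n t \<and> m \<in> fst t}"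

lemma admissible3_rotate: "admissible3 L n (I, J, K) \<Longrightarrow> admissible3 L n (J, K, I)"
  unfolding admissible3_def by auto

lemma cyc_class_rotate: "cyc_class (I, J, K) = cyc_class (J, K, I)"
  unfolding cyc_class_def by auto

lemma cyc_class_anchored_inj:
  assumes "I1 \<inter> J1 = {}" "I1 \<inter> K1 = {}" "I2 \<inter> J2 = {}" "I2 \<inter> K2 = {}"
    "m \<in> I1" "m \<in> I2" "cyc_class (I1, J1, K1) = cyc_class (I2, J2, K2)"
  shows "(I1, J1, K1) = (I2, J2, K2)"
proof -
  have "(I1, J1, K1) \<in> cyc_class (I2, J2, K2)"
    using assms(7) unfolding cyc_class_def by (metis insertI1 prod.case)
  then have "(I1, J1, K1) = (I2, J2, K2) \<or> (I1, J1, K1) = (J2, K2, I2) \<or> (I1, J1, K1) = (K2, I2, J2)"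
    unfolding cyc_class_def by simp
  moreover have "I1 \<noteq> J2" "I1 \<noteq> K2" using assms(3-6) by blast+
  ultimately show ?thesis by auto
qed

lemma finite_anchored: "finite (anchored L n m)"
proof (rule finite_subset)
  show "anchored L n m \<subseteq> Pow {1..n} \<times> Pow {1..n} \<times> Pow {1..n}"
    unfolding anchored_def admissible3_def by auto
qed auto

text \<open>Choosing the representative with m in the first part identifies the vertices
  of Gamma(L) with the anchored triples.\<close>
lemma card_Gamma_vertices_anchored:
  assumes "m \<in> {1..n}"
  shows "card (Gamma_vertices L n) = card (anchored L n m)"
proof -
  have "Gamma_vertices L n = cyc_class ` anchored L n m"
  proof
    show "cyc_class ` anchored L n m \<subseteq> Gamma_vertices L n"
      unfolding anchored_def Gamma_vertices_def by auto
  next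
    show "Gamma_vertices L n \<subseteq> cyc_class ` anchored L n m"
    proof
      fix v assume "v \<in> Gamma_vertices L n"
      then obtain I J K where adm: "admissible3 L n (I, J, K)" and v: "v = cyc_class (I, J, K)"
        unfolding Gamma_vertices_def by auto
      have "m \<in> I \<or> m \<in> J \<or> m \<in> K" using adm assms unfolding admissible3_def by auto
      moreover have "admissible3 L n (J, K, I)" "admissible3 L n (K, I, J)"
        using adm admissible3_rotate by blast+
      moreover have "v = cyc_class (J, K, I)" "v = cyc_class (K, I, J)"
        using v cyc_class_rotate by metis+
      ultimately show "v \<in> cyc_class ` anchored L n m"
        using adm v unfolding anchored_def by (auto intro: image_eqI)
    qed
  qed
  moreover have "inj_on cyc_class (anchored L n m)"
  proof (rule inj_onI)
    fix s t assume "s \<in> anchored L n m" "t \<in> anchored L n m" "cyc_class s = cyc_class t"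
    then show "s = t"
      unfolding anchored_def admissible3_def
      using cyc_class_anchored_inj[of "fst s" "fst (snd s)" "snd (snd s)"
          "fst t" "fst (snd t)" "snd (snd t)" m]
      by (auto split: prod.splits)
  qed
  ultimately show ?thesis by (simp add: card_image)
qed

lemma card_proper_nonempty_subsets:
  assumes "m \<in> {1..n}" "n \<ge> 2"
  shows "card (Pow ({1..n} - {m}) - {{}, {1..n} - {m}}) = 2 ^ (n - 1) - 2"
proof -
  let ?R = "{1..n} - {m}"
  have card_R: "card ?R = n - 1" using assms(1) by simp
  have "card (Pow ?R - {{}, ?R}) = card (Pow ?R) - card {{}, ?R}"
    by (rule card_Diff_subset) auto
  moreover have "card ?R \<noteq> 0" using card_R assms(2) by linarith
  then have "card {{}, ?R} = 2" by (metis card.empty card_2_iff)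
  ultimately show ?thesis using card_R by (simp add: card_Pow)
qed

lemma anchored_singleton:
  assumes "length_vector L n" "m \<in> {1..n}" "X \<in> Pow ({1..n} - {m}) - {{}, {1..n} - {m}}"
    "short L n X" "short L n ({1..n} - {m} - X)"
  shows "({m}, X, {1..n} - {m} - X) \<in> anchored L n m"
  using assms short_singleton[OF assms(1,2)] unfolding anchored_def admissible3_def by auto

section \<open>Lower bound: an injection from the proper subsets of R\<close>

context
  fixes L :: "nat \<Rightarrow> real" and n m :: nat
  assumes lv: "length_vector L n"
    and m_in: "m \<in> {1..n}" and m_max: "\<forall>i\<in>{1..n}. L i \<le> L m"
begin

abbreviation R :: "nat set" where "R \<equiv> {1..n} - {m}"

text \<open>Removing a piece of total
  in (|D| - |L|/2, |D| - |L|/2 + l_m] works; it exists by greedy selection since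
  every l_i \<le> l_m, and it is short because |D| + l_m < |L| (D misses some y \<in> R).\<close>
lemma long_split_exists:
  assumes D: "D \<subseteq> R" "D \<noteq> R" "\<not> short L n D" and x: "x \<in> D"
  shows "\<exists>V. x \<in> V \<and> V \<subseteq> D \<and> short L n V \<and> short L n (D - V)"
proof -
  define T where "T = total_length L n"
  have half: "T / 2 \<le> sum L D" using D(3) unfolding short_def T_def by simp
  obtain y where y: "y \<in> R" "y \<notin> D" using D by blast
  have fD: "finite D" using D(1) finite_subset by blast
  have "sum L (insert m (insert y D)) \<le> T"
  proof -
    have "insert m (insert y D) \<subseteq> {1..n}" using D y m_in by auto
    then show ?thesis unfolding T_def total_length_def
      using length_vector_pos[OF lv] by (intro sum_mono2) fastforce+
  qed
  moreover have "sum L (insert m (insert y D)) = L m + (L y + sum L D)"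
  proof -
    have "m \<notin> insert y D" using D(1) y by auto
    then show ?thesis using fD y by simp
  qed
  moreover have "L y > 0" "L m > 0" using y m_in length_vector_pos[OF lv] by auto
  ultimately have small: "sum L D + L m < T" and "T > 0" using half by linarith+
  have "\<forall>z\<in>D. 0 < L z \<and> L z \<le> L m" using D(1) m_max length_vector_pos[OF lv] by blast
  then obtain V where V: "V \<subseteq> D" "sum L D - T/2 < sum L V" "sum L V \<le> sum L D - T/2 + L m"
    using greedy_subset[OF fD, of L "L m" "sum L D - T/2"] half \<open>T > 0\<close> by auto
  have "sum L (D - V) = sum L D - sum L V" using sum_diff[OF fD V(1)] .
  then have "short L n V" "short L n (D - V)"
    using V small unfolding short_def T_def[symmetric] by linarith+
  moreover have "D - (D - V) = V" using V(1) by blast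
  ultimately show ?thesis using V(1) x by (cases "x \<in> V") (metis Diff_subset DiffI)+
qed

definition half_of :: "nat set \<Rightarrow> nat set" where
  "half_of D = (SOME V. Min D \<in> V \<and> V \<subseteq> D \<and> short L n V \<and> short L n (D - V))"

lemma half_of_props:
  assumes "D \<subseteq> R" "D \<noteq> {}" "D \<noteq> R" "\<not> short L n D"
  shows "Min D \<in> half_of D" "half_of D \<subseteq> D" "short L n (half_of D)"
    "short L n (D - half_of D)"
proof -
  have "finite D" using assms(1) finite_subset by blast
  then have "Min D \<in> D" using assms(2) by simp
  then show "Min D \<in> half_of D" "half_of D \<subseteq> D" "short L n (half_of D)"
    "short L n (D - half_of D)"
    using someI_ex[OF long_split_exists[OF assms(1,3,4)]] unfolding half_of_def by blast+
qed

definition long_vertex :: "nat set \<Rightarrow> nat set \<times> nat set \<times> nat set" where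
  "long_vertex D = ({m} \<union> (R - D), half_of D, D - half_of D)"

text \<open>Its first part is the complement of the long set D, hence short.\<close>
lemma long_vertex_admissible:
  assumes "D \<in> Pow R - {{}, R}" "\<not> short L n D"
  shows "admissible3 L n (long_vertex D)"
proof -
  have D: "D \<subseteq> R" "D \<noteq> {}" "D \<noteq> R" using assms(1) by auto
  note h = half_of_props[OF D assms(2)]
  have compl: "{1..n} - D = {m} \<union> (R - D)" using D(1) m_in by blast
  have "short L n ({m} \<union> (R - D))"
    using short_compl_of_long[OF lv _ assms(2)] D(1) unfolding compl by blast
  moreover have "half_of D \<noteq> {}" "D - half_of D \<noteq> {}"
    using h(1-3) assms(2) by auto
  moreover have "m \<notin> D" using D(1) by blast
  moreover have "{m} \<union> (R - D) \<union> half_of D \<union> (D - half_of D) = {1..n}"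
    using D(1) h(2) m_in by blast
  ultimately show ?thesis
    unfolding long_vertex_def admissible3_def using h(2-4) by blast
qed

text \<open>The injection: X goes to ({m}, X, R - X) when both halves are short, and to
  the vertex of the long one otherwise (with the last two parts swapped when
  R - X is long, so that the two cases can be told apart).\<close>
definition vertex_of :: "nat set \<Rightarrow> nat set \<times> nat set \<times> nat set" where
  "vertex_of X =
    (if \<not> short L n X then long_vertex X
     else if \<not> short L n (R - X) then
       (case long_vertex (R - X) of (I, J, K) \<Rightarrow> (I, K, J))
     else ({m}, X, R - X))"

text \<open>Its left inverse.\<close>
definition subset_of :: "nat set \<times> nat set \<times> nat set \<Rightarrow> nat set" where
  "subset_of t = (case t of (I, J, K) \<Rightarrow>
     if I = {m} then J else if Min (J \<union> K) \<in> J then J \<union> K else I - {m})"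

lemma vertex_of_anchored:
  assumes "X \<in> Pow R - {{}, R}"
  shows "vertex_of X \<in> anchored L n m"
proof -
  have RX: "R - X \<in> Pow R - {{}, R}" using assms by auto
  consider "\<not> short L n X" | "short L n X" "\<not> short L n (R - X)"
    | "short L n X" "short L n (R - X)" by blast
  then show ?thesis
  proof cases
    case 1
    then show ?thesis using long_vertex_admissible[OF assms]
      unfolding vertex_of_def anchored_def long_vertex_def by auto
  next
    case 2
    then show ?thesis using long_vertex_admissible[OF RX]
      unfolding vertex_of_def anchored_def long_vertex_def admissible3_def by auto
  next
    case 3
    then show ?thesis using anchored_singleton[OF lv m_in assms]
      unfolding vertex_of_def by simp
  qed
qed

text \<open>X is recovered: the first part is {m} only in the balanced case, and
  Min (J \<union> K) lies in J exactly when X itself is long.\<close>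
lemma subset_of_vertex_of:
  assumes "X \<in> Pow R - {{}, R}"
  shows "subset_of (vertex_of X) = X"
proof -
  have X: "X \<subseteq> R" "X \<noteq> {}" "X \<noteq> R" and RX: "R - X \<subseteq> R" "R - X \<noteq> {}" "R - X \<noteq> R"
    using assms by auto
  consider "\<not> short L n X" | "short L n X" "\<not> short L n (R - X)"
    | "short L n X" "short L n (R - X)" by blast
  then show ?thesis
  proof cases
    case 1
    note h = half_of_props[OF X 1]
    have "half_of X \<union> (X - half_of X) = X" using h(2) by blast
    then show ?thesis using 1 h(1) X
      unfolding vertex_of_def subset_of_def long_vertex_def by auto
  next
    case 2
    note h = half_of_props[OF RX 2(2)]
    have "(R - X - half_of (R - X)) \<union> half_of (R - X) = R - X" using h(2) by blast
    moreover have "R - (R - X) = X" using X(1) by blast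
    ultimately show ?thesis using 2 h(1) X
      unfolding vertex_of_def subset_of_def long_vertex_def by auto
  next
    case 3
    then show ?thesis unfolding vertex_of_def subset_of_def by simp
  qed
qed

lemma card_anchored_lower_bound:
  assumes "n \<ge> 2"
  shows "2 ^ (n - 1) - 2 \<le> card (anchored L n m)"
proof -
  have "inj_on vertex_of (Pow R - {{}, R})"
    using subset_of_vertex_of by (rule inj_on_inverseI)
  moreover have "vertex_of ` (Pow R - {{}, R}) \<subseteq> anchored L n m"
    using vertex_of_anchored by blast
  ultimately have "card (Pow R - {{}, R}) \<le> card (anchored L n m)"
    by (rule card_inj_on_le[OF _ _ finite_anchored])
  then show ?thesis using card_proper_nonempty_subsets[OF m_in assms] by simp
qed

end

section \<open>Exact count for bows\<close>

context
  fixes L :: "nat \<Rightarrow> real" and n :: nat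
  assumes bow: "is_bow L n" and n_ge: "n \<ge> 2"
begin

abbreviation R\<^sub>n :: "nat set" where "R\<^sub>n \<equiv> {1..n} - {n}"

lemma bow_length_vector: "length_vector L n"
  using bow unfolding is_bow_def by simp

lemma bow_pair_long:
  assumes "i \<in> R\<^sub>n"
  shows "\<not> short L n {n, i}"
proof -
  have "i \<in> {1..n-1}" using assms by auto
  then show ?thesis using bow unfolding is_bow_def long_def by blast
qed

text \<open>In a bow, a subset of [n] - {n} missing some index is short: it lies in the
  complement of the long set {n, i}.\<close>
lemma bow_short_subset:
  assumes "X \<subseteq> R\<^sub>n" "i \<in> R\<^sub>n" "i \<notin> X"
  shows "short L n X"
proof -
  have "{n, i} \<subseteq> {1..n}" using assms(2) by auto
  then have "short L n ({1..n} - {n, i})"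
    using short_compl_of_long[OF bow_length_vector _ bow_pair_long[OF assms(2)]] by blast
  moreover have "X \<subseteq> {1..n} - {n, i}" using assms by auto
  ultimately show ?thesis using short_mono[OF bow_length_vector, of "{1..n} - {n, i}" X] by blast
qed

lemma bow_short_part_of_n:
  assumes "P \<subseteq> {1..n}" "n \<in> P" "short L n P"
  shows "P = {n}"
proof (rule ccontr)
  assume "P \<noteq> {n}"
  then obtain i where i: "i \<in> P" "i \<noteq> n" using assms(2) by blast
  then have "short L n {n, i}" using short_mono[OF bow_length_vector assms(1)] assms by auto
  moreover have "i \<in> R\<^sub>n" using i assms(1) by auto
  ultimately show False using bow_pair_long by blast
qed

lemma bow_anchored:
  "anchored L n n = (\<lambda>X. ({n}, X, R\<^sub>n - X)) ` (Pow R\<^sub>n - {{}, R\<^sub>n})"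
proof
  show "anchored L n n \<subseteq> (\<lambda>X. ({n}, X, R\<^sub>n - X)) ` (Pow R\<^sub>n - {{}, R\<^sub>n})"
  proof
    fix t assume t: "t \<in> anchored L n n"
    obtain I J K where IJK: "t = (I, J, K)" by (cases t)
    have adm: "admissible3 L n (I, J, K)" and "n \<in> I" using t IJK unfolding anchored_def by auto
    moreover have "I \<subseteq> {1..n}" "short L n I" using adm unfolding admissible3_def by auto
    ultimately have I: "I = {n}" using bow_short_part_of_n by blast
    then have "K = R\<^sub>n - J" "J \<in> Pow R\<^sub>n - {{}, R\<^sub>n}"
      using adm unfolding admissible3_def by auto
    then show "t \<in> (\<lambda>X. ({n}, X, R\<^sub>n - X)) ` (Pow R\<^sub>n - {{}, R\<^sub>n})"
      using IJK I by blast
  qed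
next
  show "(\<lambda>X. ({n}, X, R\<^sub>n - X)) ` (Pow R\<^sub>n - {{}, R\<^sub>n}) \<subseteq> anchored L n n"
  proof
    fix t assume "t \<in> (\<lambda>X. ({n}, X, R\<^sub>n - X)) ` (Pow R\<^sub>n - {{}, R\<^sub>n})"
    then obtain X where X: "X \<in> Pow R\<^sub>n - {{}, R\<^sub>n}" and t: "t = ({n}, X, R\<^sub>n - X)" by blast
    obtain i j where ij: "i \<in> R\<^sub>n" "i \<notin> X" "j \<in> X" using X by blast
    have "short L n X" using bow_short_subset[of X i] X ij by blast
    moreover have "short L n (R\<^sub>n - X)" using bow_short_subset[of "R\<^sub>n - X" j] X ij by blast
    moreover have "n \<in> {1..n}" using n_ge by simp
    ultimately show "t \<in> anchored L n n"
      using anchored_singleton[OF bow_length_vector _ X] t by blast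
  qed
qed

lemma card_anchored_bow: "card (anchored L n n) = 2 ^ (n - 1) - 2"
proof -
  have "inj_on (\<lambda>X. ({n}, X, R\<^sub>n - X)) (Pow R\<^sub>n - {{}, R\<^sub>n})" by (rule inj_onI) simp
  then have "card (anchored L n n) = card (Pow R\<^sub>n - {{}, R\<^sub>n})"
    unfolding bow_anchored by (rule card_image)
  moreover have "n \<in> {1..n}" using n_ge by simp
  ultimately show ?thesis using card_proper_nonempty_subsets n_ge by simp
qed

end

theorem mainTheorem2:
  fixes L :: "nat \<Rightarrow> real" and n :: nat
  assumes "n \<ge> 4" and "is_bow L n"
  shows "card (Gamma_vertices L n) = 2 ^ (n - 1) - 2 \<and>
         (\<forall>L' :: nat \<Rightarrow> real. length_vector L' n \<longrightarrow>
            card (Gamma_vertices L n) \<le> card (Gamma_vertices L' n))"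
proof -
  have n_ge: "n \<ge> 2" using assms(1) by simp
  have bow_count: "card (Gamma_vertices L n) = 2 ^ (n - 1) - 2"
    using card_Gamma_vertices_anchored[of n n L] card_anchored_bow[OF assms(2) n_ge] n_ge by simp
  have "2 ^ (n - 1) - 2 \<le> card (Gamma_vertices L' n)" if lv: "length_vector L' n" for L'
  proof -
    obtain m where m: "m \<in> {1..n}" "\<forall>i\<in>{1..n}. L' i \<le> L' m"
      using exists_longest_index[of n L'] n_ge by auto
    show ?thesis
      using card_anchored_lower_bound[OF lv m n_ge] card_Gamma_vertices_anchored[OF m(1)] by simp
  qed
  then show ?thesis using bow_count by simp
qed

end
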